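(* Let $d=\infty$, $C>0$ and ${\boldsymbol\gamma}\in\mathcal M_d$. Then $T^\downarrow_{d,C}{\boldsymbol\gamma}\in\mathcal S_{d,C}$, and for every $u\in\mathcal U_d$ the iterated limit $\lim_{r\to\infty}\lim_{s\to\infty}(\Delta_{[s]\setminus[r]}{\boldsymbol\gamma})_u$ exists and $$\big((T^\uparrow_{d,C}\circ T^\downarrow_{d,C}){\boldsymbol\gamma}\big)_u=\lim_{r\to\infty}\lim_{s\to\infty}(\Delta_{[s]\setminus[r]}{\boldsymbol\gamma})_u\le\gamma_u.$$
   Context: Let $d\in\mathbb N\cup\{\infty\}$. Write $[d]=\{1,\dots,d\}$ if $d\in\mathbb N$ and $[d]=\mathbb N$ if $d=\infty$; for $s\in\mathbb N$, $[s]=\{1,\dots,s\}$. Let $\mathcal U_d$ be the set of all finite subsets of $[d]$. The set of weights is $\mathcal W_d=\{{\boldsymbol\gamma}\in\mathbb R^{\mathcal U_d}:{\boldsymbol\gamma}\ge\mathbf 0\}$ (inequalities componentwise). For $v\in\mathcal U_d$, $(\Delta_v{\boldsymbol\gamma})_u=\sum_{w\subseteq v}(-1)^{|w|}\gamma_{u\cup w}$. $\mathcal M_d$ is the set of weights with $\Delta_v{\boldsymbol\gamma}\ge\mathbf 0$ for all $v\in\mathcal U_d$ (completely monotone weights). For $C>0$, $\mathcal S_{d,C}=\{{\boldsymbol\gamma}\in\mathcal W_d:\sum_{v}C^{2|v|}\gamma_v<\infty\}$, $T^\uparrow_{d,C}\colon\mathcal S_{d,C}\to\mathcal W_d$, $(T^\uparrow_{d,C}{\boldsymbol\gamma})_u=\sum_{v\supseteq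 u}C^{2|v|}\gamma_v$, and for $d=\infty$, $T^\downarrow_{d,C}\colon\mathcal M_d\to\mathcal W_d$, $(T^\downarrow_{d,C}{\boldsymbol\gamma})_u=C^{-2|u|}\lim_{s\to\infty}(\Delta_{[s]\setminus u}{\boldsymbol\gamma})_u$ (the limit exists since the sequence is non-increasing in $[0,\gamma_u]$). *)

theory Defs
  imports "HOL-Analysis.Analysis"
begin

text \<open>Case d = infinity: [d] = {1,2,...}. Weights are functions on sets of naturals;
  only their values on the index set U (finite subsets of {1..}) matter.\<close>

definition U_inf :: "nat set set" where
  "U_inf = {u. finite u \<and> u \<subseteq> {1..}}"

definition Delta :: "nat set \<Rightarrow> (nat set \<Rightarrow> real) \<Rightarrow> nat set \<Rightarrow> real" where
  "Delta v \<gamma> u = (\<Sum>w\<in>Pow v. (-1) ^ card w * \<gamma> (u \<union> w))"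

definition weights :: "(nat set \<Rightarrow> real) set" where
  "weights = {\<gamma>. \<forall>u\<in>U_inf. 0 \<le> \<gamma> u}"

definition compl_monotone :: "(nat set \<Rightarrow> real) set" where
  "compl_monotone = {\<gamma>. \<gamma> \<in> weights \<and> (\<forall>v\<in>U_inf. \<forall>u\<in>U_inf. 0 \<le> Delta v \<gamma> u)}"

definition S_space :: "real \<Rightarrow> (nat set \<Rightarrow> real) set" where
  "S_space C = {\<gamma>. \<gamma> \<in> weights \<and> (\<lambda>v. C ^ (2 * card v) * \<gamma> v) summable_on U_inf}"

definition T_up :: "real \<Rightarrow> (nat set \<Rightarrow> real) \<Rightarrow> nat set \<Rightarrow> real" where
  "T_up C \<gamma> u = (\<Sum>\<^sub>\<infinity>v\<in>{v\<in>U_inf. u \<subseteq> v}. C ^ (2 * card v) * \<gamma> v)"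

definition T_down :: "real \<Rightarrow> (nat set \<Rightarrow> real) \<Rightarrow> nat set \<Rightarrow> real" where
  "T_down C \<gamma> u = inverse (C ^ (2 * card u)) * lim (\<lambda>s. Delta ({1..s} - u) \<gamma> u)"

end

theory Submission
  imports Defs
begin

(* Put a v = lim_s (Delta_([s]-v) gamma)_v, so that C^(2|v|) (T_down C gamma)_v = a v: the
   factor C cancels and everything reduces to C = 1.  Splitting off one coordinate at a time,
   (Delta_W gamma)_u = (Delta_(W + {k}) gamma)_u + (Delta_W gamma)_(u + {k}), gives for u <= [r]
   and s >= r the identity
     (Delta_([s]-[r]) gamma)_u = sum over u <= v <= [r] of (Delta_([s]-v) gamma)_v,
   so the inner limit over s is the finite partial sum of a over u <= v <= [r].  By complete
   monotonicity the differences are nonnegative and antitone in the difference set; hence the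
   inner limits exist, increase with r and stay below (Delta_{} gamma)_u = gamma_u.  Since the
   finite sets {v. u <= v <= [r]} exhaust {v. u <= v}, the nonnegative family a has sum equal
   to the iterated limit there. *)

lemma U_inf_iff_bounded: "v \<in> U_inf \<longleftrightarrow> (\<exists>r. v \<subseteq> {1..r})"
proof
  assume "v \<in> U_inf"
  then obtain r where "\<forall>x\<in>v. x \<le> r" "v \<subseteq> {1..}"
    unfolding U_inf_def using finite_nat_set_iff_bounded_le by auto
  then have "v \<subseteq> {1..r}" by auto
  then show "\<exists>r. v \<subseteq> {1..r}" ..
qed (auto simp: U_inf_def intro: finite_subset)

lemma Delta_empty [simp]: "Delta {} g u = g u"
  unfolding Delta_def by simp

lemma Delta_insert:
  assumes "k \<notin> v" "finite v"
  shows "Delta (insert k v) g u = Delta v g u - Delta v g (insert k u)"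
proof -
  have inj: "inj_on (insert k) (Pow v)"
    using assms(1) by (intro inj_onI) (metis PowD insert_ident subsetD)
  have "Delta (insert k v) g u = (\<Sum>w\<in>Pow v. (-1) ^ card w * g (u \<union> w))
      + (\<Sum>w\<in>insert k ` Pow v. (-1) ^ card w * g (u \<union> w))"
    unfolding Delta_def Pow_insert using assms by (intro sum.union_disjoint) auto
  also have "(\<Sum>w\<in>insert k ` Pow v. (-1) ^ card w * g (u \<union> w))
      = (\<Sum>w\<in>Pow v. (-1) ^ card (insert k w) * g (insert k u \<union> w))"
    using inj by (simp add: sum.reindex)
  also have "\<dots> = - Delta v g (insert k u)"
    unfolding Delta_def sum_negf[symmetric] using assms
    by (intro sum.cong) (auto simp: card_insert_if finite_subset[of _ v])
  finally show ?thesis unfolding Delta_def by simp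
qed

lemma Delta_expand:
  assumes "finite W" "finite B" "B \<inter> W = {}"
  shows "Delta W g u = (\<Sum>c\<in>Pow B. Delta (W \<union> (B - c)) g (u \<union> c))"
  using assms(2,3)
proof (induction B)
  case empty
  then show ?case by simp
next
  case (insert k B)
  have inj: "inj_on (insert k) (Pow B)"
    using insert.hyps by (intro inj_onI) (metis PowD insert_ident subsetD)
  have peel: "Delta (W \<union> (B - c)) g (u \<union> c)
      = Delta (W \<union> (insert k B - c)) g (u \<union> c)
        + Delta (W \<union> (insert k B - insert k c)) g (u \<union> insert k c)"
    if "c \<in> Pow B" for c
  proof -
    have "W \<union> (insert k B - c) = insert k (W \<union> (B - c))"
      "W \<union> (insert k B - insert k c) = W \<union> (B - c)" "u \<union> insert k c = insert k (u \<union> c)"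
      using that insert by auto
    moreover have "k \<notin> W \<union> (B - c)" using insert by auto
    ultimately show ?thesis using Delta_insert[of k "W \<union> (B - c)"] assms(1) insert.hyps by simp
  qed
  have "Delta W g u = (\<Sum>c\<in>Pow B. Delta (W \<union> (insert k B - c)) g (u \<union> c))
      + (\<Sum>c\<in>insert k ` Pow B. Delta (W \<union> (insert k B - c)) g (u \<union> c))"
    using insert peel inj by (simp add: sum.distrib sum.reindex)
  also have "\<dots> = (\<Sum>c\<in>Pow (insert k B). Delta (W \<union> (insert k B - c)) g (u \<union> c))"
    unfolding Pow_insert using insert.hyps by (intro sum.union_disjoint[symmetric]) auto
  finally show ?case .
qed

lemma Delta_nonneg:
  assumes "g \<in> compl_monotone" "v \<in> U_inf" "u \<in> U_inf"
  shows "0 \<le> Delta v g u"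
  using assms unfolding compl_monotone_def by blast

lemma Delta_antimono:
  assumes g: "g \<in> compl_monotone" and "v \<subseteq> w" "w \<in> U_inf" "u \<in> U_inf"
  shows "Delta w g u \<le> Delta v g u"
proof -
  have fin: "finite w" "w \<subseteq> {1..}" using assms(3) unfolding U_inf_def by auto
  \<comment> \<open>Expand Delta v over c \<subseteq> w - v: the term c = {} is Delta w, all others are nonnegative.\<close>
  have "Delta w g u = Delta (v \<union> ((w - v) - {})) g (u \<union> {})"
    using assms(2) by (simp add: Un_absorb1)
  also have "\<dots> \<le> (\<Sum>c\<in>Pow (w - v). Delta (v \<union> ((w - v) - c)) g (u \<union> c))"
  proof (rule member_le_sum)
    fix c assume "c \<in> Pow (w - v) - {{}}"
    then have "v \<union> ((w - v) - c) \<in> U_inf" "u \<union> c \<in> U_inf"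
      using assms(2,4) fin unfolding U_inf_def by (auto intro: finite_subset)
    then show "0 \<le> Delta (v \<union> ((w - v) - c)) g (u \<union> c)" by (rule Delta_nonneg[OF g])
  qed (use fin in auto)
  also have "\<dots> = Delta v g u"
    using assms(2) fin by (intro Delta_expand[symmetric]) (auto intro: finite_subset)
  finally show ?thesis .
qed

lemma Delta_tail_decseq:
  assumes "g \<in> compl_monotone" "u \<in> U_inf"
  shows "decseq (\<lambda>s. Delta ({1..s} - A) g u)"
  by (rule decseq_SucI, rule Delta_antimono[OF assms(1) _ _ assms(2)]) (auto simp: U_inf_def)

lemma Delta_tail_nonneg:
  assumes "g \<in> compl_monotone" "u \<in> U_inf"
  shows "0 \<le> Delta ({1..s} - A) g u"
  by (rule Delta_nonneg[OF assms(1) _ assms(2)]) (auto simp: U_inf_def)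

lemma
  assumes "g \<in> compl_monotone" "u \<in> U_inf"
  shows Delta_tail_LIMSEQ: "(\<lambda>s. Delta ({1..s} - A) g u) \<longlonglongrightarrow> lim (\<lambda>s. Delta ({1..s} - A) g u)"
    and Delta_tail_lim_le: "lim (\<lambda>s. Delta ({1..s} - A) g u) \<le> Delta ({1..s} - A) g u"
    and Delta_tail_lim_nonneg: "0 \<le> lim (\<lambda>s. Delta ({1..s} - A) g u)"
proof -
  obtain L where L: "(\<lambda>s. Delta ({1..s} - A) g u) \<longlonglongrightarrow> L" "\<And>s. L \<le> Delta ({1..s} - A) g u"
    using decseq_convergent[OF Delta_tail_decseq[OF assms]] Delta_tail_nonneg[OF assms] by blast
  then have "lim (\<lambda>s. Delta ({1..s} - A) g u) = L" by (intro limI)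
  with L show "(\<lambda>s. Delta ({1..s} - A) g u) \<longlonglongrightarrow> lim (\<lambda>s. Delta ({1..s} - A) g u)"
    "lim (\<lambda>s. Delta ({1..s} - A) g u) \<le> Delta ({1..s} - A) g u"
    by auto
  show "0 \<le> lim (\<lambda>s. Delta ({1..s} - A) g u)"
    using L(1) Delta_tail_nonneg[OF assms] \<open>lim _ = L\<close> by (auto intro: LIMSEQ_le_const)
qed

lemma Delta_tail_lim_mono:
  assumes g: "g \<in> compl_monotone" and u: "u \<in> U_inf" and "A \<subseteq> B"
  shows "lim (\<lambda>s. Delta ({1..s} - A) g u) \<le> lim (\<lambda>s. Delta ({1..s} - B) g u)"
proof (rule LIMSEQ_le[OF Delta_tail_LIMSEQ[OF g u] Delta_tail_LIMSEQ[OF g u]])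
  show "\<exists>N. \<forall>s\<ge>N. Delta ({1..s} - A) g u \<le> Delta ({1..s} - B) g u"
    using assms(3) by (intro exI allI impI Delta_antimono[OF g _ _ u]) (auto simp: U_inf_def)
qed

lemma Delta_tail_lim_le_weight:
  assumes "g \<in> compl_monotone" "u \<in> U_inf"
  shows "lim (\<lambda>s. Delta ({1..s} - A) g u) \<le> g u"
  using Delta_tail_lim_le[OF assms, of A 0] by simp

lemma T_down_1: "T_down 1 g v = lim (\<lambda>s. Delta ({1..s} - v) g v)"
  unfolding T_down_def by simp

lemma T_down_scale:
  assumes "C \<noteq> 0"
  shows "C ^ (2 * card v) * T_down C g v = T_down 1 g v"
  using assms unfolding T_down_def by simp

lemma sum_Pow_Diff_union:
  assumes "u \<subseteq> S"
  shows "(\<Sum>c\<in>Pow (S - u). f (u \<union> c)) = (\<Sum>v | u \<subseteq> v \<and> v \<subseteq> S. f v)"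
  by (rule sum.reindex_bij_witness[where i = "\<lambda>v. v - u" and j = "\<lambda>c. u \<union> c"])
    (use assms in auto)

lemma Delta_tail_lim_eq_sum:
  assumes g: "g \<in> compl_monotone" and u: "u \<subseteq> {1..r}"
  shows "lim (\<lambda>s. Delta ({1..s} - {1..r}) g u) = (\<Sum>v | u \<subseteq> v \<and> v \<subseteq> {1..r}. T_down 1 g v)"
proof -
  have expand: "Delta ({1..s} - {1..r}) g u
      = (\<Sum>c\<in>Pow ({1..r} - u). Delta ({1..s} - (u \<union> c)) g (u \<union> c))"
    if "r \<le> s" for s
  proof -
    have "{1..s} - {1..r} \<union> ({1..r} - u - c) = {1..s} - (u \<union> c)" if "c \<subseteq> {1..r} - u" for c
      using that \<open>r \<le> s\<close> u by auto
    then show ?thesis by (subst Delta_expand[where B = "{1..r} - u"]) auto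
  qed
  have "(\<lambda>s. \<Sum>c\<in>Pow ({1..r} - u). Delta ({1..s} - (u \<union> c)) g (u \<union> c))
      \<longlonglongrightarrow> (\<Sum>c\<in>Pow ({1..r} - u). T_down 1 g (u \<union> c))"
    unfolding T_down_1 using u
    by (intro tendsto_sum Delta_tail_LIMSEQ[OF g]) (auto simp: U_inf_iff_bounded)
  then have "(\<lambda>s. Delta ({1..s} - {1..r}) g u)
      \<longlonglongrightarrow> (\<Sum>c\<in>Pow ({1..r} - u). T_down 1 g (u \<union> c))"
    by (rule Lim_transform_eventually) (intro eventually_sequentiallyI[of r] expand[symmetric])
  then show ?thesis
    using sum_Pow_Diff_union[OF u] by (simp add: limI)
qed

lemma incseq_finite_subset_member:
  assumes "incseq F" "finite G" "G \<subseteq> (\<Union>r. F r)"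
  obtains r where "G \<subseteq> F r"
proof -
  have "\<exists>r. G \<subseteq> F r"
    using assms(2,3)
  proof (induction G)
    case empty
    then show ?case by simp
  next
    case (insert x G)
    then obtain r1 r2 where "x \<in> F r1" "G \<subseteq> F r2" by blast
    then have "insert x G \<subseteq> F (max r1 r2)"
      using monoD[OF assms(1), of r1 "max r1 r2"] monoD[OF assms(1), of r2 "max r1 r2"] by auto
    then show ?case by blast
  qed
  with that show thesis by blast
qed

lemma nonneg_has_sum_incseq_exhaustion:
  fixes f :: "'a \<Rightarrow> real"
  assumes nonneg: "\<And>x. x \<in> A \<Longrightarrow> 0 \<le> f x"
    and F: "incseq F" "\<And>r. finite (F r)" "(\<Union>r. F r) = A"
    and lim: "(\<lambda>r. sum f (F r)) \<longlonglongrightarrow> L"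
  shows "(f has_sum L) A"
proof -
  have "incseq (\<lambda>r. sum f (F r))"
    using F by (intro monoI sum_mono2) (auto dest: monoD intro!: nonneg)
  then have le_L: "sum f (F r) \<le> L" for r
    using lim by (rule incseq_le)
  have sum_le: "sum f G \<le> L" if G: "finite G" "G \<subseteq> A" for G
  proof -
    obtain r where "G \<subseteq> F r" using incseq_finite_subset_member[OF F(1) G(1)] G(2) F(3) by blast
    then have "sum f G \<le> sum f (F r)" using F by (intro sum_mono2) (auto intro!: nonneg)
    with le_L[of r] show ?thesis by linarith
  qed
  have bdd: "bdd_above (sum f ` {G. G \<subseteq> A \<and> finite G})"
    using sum_le by (intro bdd_aboveI2) auto
  have "(SUP G\<in>{G. finite G \<and> G \<subseteq> A}. sum f G) = L"
  proof (rule antisym)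
    show "(SUP G\<in>{G. finite G \<and> G \<subseteq> A}. sum f G) \<le> L"
      using sum_le by (intro cSUP_least) auto
    have "sum f (F r) \<le> (SUP G\<in>{G. finite G \<and> G \<subseteq> A}. sum f G)" for r
      using bdd F by (intro cSUP_upper) (auto simp: conj_commute)
    then show "L \<le> (SUP G\<in>{G. finite G \<and> G \<subseteq> A}. sum f G)"
      using lim by (intro LIMSEQ_le_const2) auto
  qed
  then show ?thesis
    using nonneg_bdd_above_has_sum[OF nonneg bdd] by simp
qed

lemma
  assumes g: "g \<in> compl_monotone" and u: "u \<in> U_inf"
  shows iterated_Delta_tail_LIMSEQ: "(\<lambda>r. lim (\<lambda>s. Delta ({1..s} - {1..r}) g u))
      \<longlonglongrightarrow> lim (\<lambda>r. lim (\<lambda>s. Delta ({1..s} - {1..r}) g u))"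
    and iterated_Delta_tail_lim_le: "lim (\<lambda>r. lim (\<lambda>s. Delta ({1..s} - {1..r}) g u)) \<le> g u"
proof -
  have "incseq (\<lambda>r. lim (\<lambda>s. Delta ({1..s} - {1..r}) g u))"
    by (intro incseq_SucI Delta_tail_lim_mono[OF g u]) auto
  then obtain L where L: "(\<lambda>r. lim (\<lambda>s. Delta ({1..s} - {1..r}) g u)) \<longlonglongrightarrow> L"
    using incseq_convergent Delta_tail_lim_le_weight[OF g u] by metis
  then show "(\<lambda>r. lim (\<lambda>s. Delta ({1..s} - {1..r}) g u))
      \<longlonglongrightarrow> lim (\<lambda>r. lim (\<lambda>s. Delta ({1..s} - {1..r}) g u))"
    by (simp add: limI)
  show "lim (\<lambda>r. lim (\<lambda>s. Delta ({1..s} - {1..r}) g u)) \<le> g u"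
    using L Delta_tail_lim_le_weight[OF g u] by (simp add: limI LIMSEQ_le_const2)
qed

lemma T_down_1_has_sum:
  assumes g: "g \<in> compl_monotone" and u: "u \<in> U_inf"
  shows "(T_down 1 g has_sum lim (\<lambda>r. lim (\<lambda>s. Delta ({1..s} - {1..r}) g u)))
    {v \<in> U_inf. u \<subseteq> v}"
proof (rule nonneg_has_sum_incseq_exhaustion)
  show "0 \<le> T_down 1 g v" if "v \<in> {v \<in> U_inf. u \<subseteq> v}" for v
    using that unfolding T_down_1 by (intro Delta_tail_lim_nonneg[OF g]) auto
  show "incseq (\<lambda>r. {v. u \<subseteq> v \<and> v \<subseteq> {1..r}})"
    by (intro monoI) auto
  show "finite {v. u \<subseteq> v \<and> v \<subseteq> {1..r}}" for r
    by (rule finite_subset[of _ "Pow {1..r}"]) auto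
  show "(\<Union>r. {v. u \<subseteq> v \<and> v \<subseteq> {1..r}}) = {v \<in> U_inf. u \<subseteq> v}"
    by (auto simp: U_inf_iff_bounded)
  obtain r0 where r0: "u \<subseteq> {1..r0}" using u by (auto simp: U_inf_iff_bounded)
  have "\<forall>\<^sub>F r in sequentially.
      lim (\<lambda>s. Delta ({1..s} - {1..r}) g u) = (\<Sum>v | u \<subseteq> v \<and> v \<subseteq> {1..r}. T_down 1 g v)"
    using r0 by (intro eventually_sequentiallyI[of r0] Delta_tail_lim_eq_sum[OF g]) auto
  with iterated_Delta_tail_LIMSEQ[OF g u]
  show "(\<lambda>r. \<Sum>v | u \<subseteq> v \<and> v \<subseteq> {1..r}. T_down 1 g v)
      \<longlonglongrightarrow> lim (\<lambda>r. lim (\<lambda>s. Delta ({1..s} - {1..r}) g u))"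
    by (rule Lim_transform_eventually)
qed

theorem mainTheorem3:
  fixes C :: real and \<gamma> :: "nat set \<Rightarrow> real"
  assumes "C > 0" and "\<gamma> \<in> compl_monotone"
  shows "T_down C \<gamma> \<in> S_space C \<and>
    (\<forall>u\<in>U_inf.
       (\<forall>r. convergent (\<lambda>s. Delta ({1..s} - {1..r}) \<gamma> u)) \<and>
       convergent (\<lambda>r. lim (\<lambda>s. Delta ({1..s} - {1..r}) \<gamma> u)) \<and>
       T_up C (T_down C \<gamma>) u = lim (\<lambda>r. lim (\<lambda>s. Delta ({1..s} - {1..r}) \<gamma> u)) \<and>
       lim (\<lambda>r. lim (\<lambda>s. Delta ({1..s} - {1..r}) \<gamma> u)) \<le> \<gamma> u)"
proof -
  have scale: "(\<lambda>v. C ^ (2 * card v) * T_down C \<gamma> v) = T_down 1 \<gamma>"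
    using assms(1) by (simp add: T_down_scale)
  have "T_down C \<gamma> v = inverse (C ^ (2 * card v)) * T_down 1 \<gamma> v" for v
    by (simp add: T_down_def)
  then have "T_down C \<gamma> \<in> weights"
    using assms Delta_tail_lim_nonneg unfolding weights_def T_down_1 by simp
  moreover have "T_down 1 \<gamma> summable_on U_inf"
    using T_down_1_has_sum[OF assms(2), of "{}"] by (auto simp: U_inf_def summable_on_def)
  ultimately have "T_down C \<gamma> \<in> S_space C"
    unfolding S_space_def by (simp add: scale)
  moreover have "T_up C (T_down C \<gamma>) u = lim (\<lambda>r. lim (\<lambda>s. Delta ({1..s} - {1..r}) \<gamma> u))"
    if "u \<in> U_inf" for u
    unfolding T_up_def scale using T_down_1_has_sum[OF assms(2) that] by (rule infsumI)
  ultimately show ?thesis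
    using Delta_tail_LIMSEQ[OF assms(2)] iterated_Delta_tail_LIMSEQ[OF assms(2)]
      iterated_Delta_tail_lim_le[OF assms(2)]
    unfolding convergent_def by blast
qed

end
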